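(* Let $A\in\mathbb{R}^{m\times d}$ have the phase retrieval property in $\mathbb{R}^d$ and let $\Omega\subset U_A$ be a convex domain. Then there exists a constant $\alpha>0$ depending only on $A$ such that $\alpha\cdot\mathrm{dist}(\Phi_A(b),\Phi_A(b'))\le\|b-b'\|$ for all $b,b'\in\Omega$.
   Context: $\|\cdot\|$ is the Euclidean norm, $|Ax|$ the entrywise absolute value. $A$ has the phase retrieval property in $\mathbb{R}^d$ if $|Ax|=|Ay|$ implies $x=\pm y$. $\Phi_A(b):=\operatorname{argmin}_{x\in\mathbb{R}^d}\|\,|Ax|-b\,\|^2$. $\mathcal{K}_A:=\{|Ax|:x\in\mathbb{R}^d\}$; $U_A$ is the set of $b\in\mathbb{R}^m$ having exactly one nearest point in $\mathcal{K}_A$. $\mathrm{dist}(\Phi_A(b),\Phi_A(b')):=\min\{\|x-cy\|: x\in\Phi_A(b),\,y\in\Phi_A(b'),\,c\in\{1,-1\}\}$. *)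

theory Defs
  imports "HOL-Analysis.Analysis"
begin

definition absmv :: "real^'d^'m \<Rightarrow> real^'d \<Rightarrow> real^'m" where
  "absmv A x = (\<chi> i. \<bar>(A *v x) $ i\<bar>)"

definition phase_retrieval :: "real^'d^'m \<Rightarrow> bool" where
  "phase_retrieval A \<longleftrightarrow> (\<forall>x y. absmv A x = absmv A y \<longrightarrow> x = y \<or> x = - y)"

definition Phi :: "real^'d^'m \<Rightarrow> real^'m \<Rightarrow> (real^'d) set" where
  "Phi A b = {x. \<forall>y. (norm (absmv A x - b))\<^sup>2 \<le> (norm (absmv A y - b))\<^sup>2}"

definition KA :: "real^'d^'m \<Rightarrow> (real^'m) set" where
  "KA A = range (absmv A)"

definition UA :: "real^'d^'m \<Rightarrow> (real^'m) set" where
  "UA A = {b. \<exists>!k. k \<in> KA A \<and> (\<forall>k'\<in>KA A. dist b k \<le> dist b k')}"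

text \<open>dist(Phi_A(b), Phi_A(b')) = min over x, y, c = +-1 of ||x - c y||
  (the minimum is attained; we write it as an infimum).\<close>
definition Phi_dist :: "real^'d^'m \<Rightarrow> real^'m \<Rightarrow> real^'m \<Rightarrow> real" where
  "Phi_dist A b b' = Inf {norm (x - c *\<^sub>R y) | x y c. x \<in> Phi A b \<and> y \<in> Phi A b' \<and> c \<in> {1, -1}}"

end

theory Submission
  imports Defs
begin

text \<open>
  Phase retrieval implies the complement property: for every set S of rows, the rows in S
  or the rows outside S determine x. Splitting the rows according to whether
  \<open>\<bar>(A(x - y))\<^sub>i\<bar>\<close> or \<open>\<bar>(A(x + y))\<^sub>i\<bar>\<close> is smaller
  yields a lower Lipschitz bound \<open>c \<cdot> min \<parallel>x - y\<parallel> \<parallel>x + y\<parallel> \<le> \<parallel>|Ax| - |Ay|\<parallel>\<close>.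
  On the other side, \<open>K\<^sub>A\<close> is the union of finitely many closed convex cones, one for each sign
  pattern of \<open>Ax\<close>. Along a segment in \<open>U\<^sub>A\<close>, the unique nearest point of \<open>K\<^sub>A\<close> is, on each
  of finitely many closed pieces, the metric projection onto one of these cones, which is
  1-Lipschitz; chaining the pieces shows that the nearest-point map is 1-Lipschitz on convex
  subsets of \<open>U\<^sub>A\<close>. Since every preimage of the nearest point lies in \<open>\<Phi>\<^sub>A(b)\<close>, both
  estimates combine to the theorem.
\<close>

lemma dist_le_of_finite_closed_cover:
  fixes k :: "real \<Rightarrow> 'a::metric_space" and T :: "'i \<Rightarrow> real set"
  assumes "finite F"
    and closed: "\<And>i. closed (T i)"
    and lipschitz: "\<And>i s t. s \<in> T i \<Longrightarrow> t \<in> T i \<Longrightarrow> dist (k s) (k t) \<le> L * \<bar>s - t\<bar>"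
  shows "t0 \<le> t1 \<Longrightarrow> {t0..t1} \<subseteq> \<Union>(T ` F) \<Longrightarrow> dist (k t0) (k t1) \<le> L * (t1 - t0)"
  using assms(1)
proof (induction F arbitrary: t0 rule: finite_psubset_induct)
  case (psubset F)
  from psubset.prems obtain i where i: "i \<in> F" "t0 \<in> T i" by auto
  define R where "R = T i \<inter> {t0..t1}"
  have "t0 \<in> R" "closed R" "bdd_above R" using i psubset.prems closed by (auto simp: R_def)
  define \<tau> where "\<tau> = Sup R"
  have \<tau>: "\<tau> \<in> R" unfolding \<tau>_def using closed_contains_Sup \<open>t0 \<in> R\<close> \<open>closed R\<close> \<open>bdd_above R\<close> by blast
  have "dist (k t0) (k \<tau>) \<le> L * (\<tau> - t0)"
    using lipschitz[of t0 i \<tau>] i \<tau> by (auto simp: R_def)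
  moreover have "dist (k \<tau>) (k t1) \<le> L * (t1 - \<tau>)"
  proof (cases "\<tau> = t1")
    case False
    then have "\<tau> < t1" using \<tau> by (auto simp: R_def)
    have "{\<tau><..t1} \<subseteq> \<Union>(T ` (F - {i}))"
    proof
      fix t assume t: "t \<in> {\<tau><..t1}"
      then have "t \<in> {t0..t1}" using \<tau> by (auto simp: R_def)
      then obtain j where "j \<in> F" "t \<in> T j" using psubset.prems by auto
      moreover have "t \<notin> T i"
        using cSup_upper[of t R] \<open>bdd_above R\<close> t \<open>t \<in> {t0..t1}\<close> by (auto simp: R_def \<tau>_def)
      ultimately show "t \<in> \<Union>(T ` (F - {i}))" by auto
    qed
    moreover have "closed (\<Union>(T ` (F - {i})))" using psubset.hyps closed by auto
    ultimately have "closure {\<tau><..t1} \<subseteq> \<Union>(T ` (F - {i}))" by (rule closure_minimal)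
    with \<open>\<tau> < t1\<close> have "{\<tau>..t1} \<subseteq> \<Union>(T ` (F - {i}))" by simp
    then show ?thesis using psubset.IH[of "F - {i}" \<tau>] \<open>\<tau> < t1\<close> i(1) by auto
  qed simp
  ultimately have "dist (k t0) (k \<tau>) + dist (k \<tau>) (k t1) \<le> L * (t1 - t0)"
    by (simp add: algebra_simps)
  then show ?case using dist_triangle[of "k t0" "k t1" "k \<tau>"] by linarith
qed

lemma infdist_eq_dist_closest_point:
  "closed S \<Longrightarrow> S \<noteq> {} \<Longrightarrow> infdist a S = dist a (closest_point S a)"
  by (simp add: infdist_eq_setdist setdist_closest_point)

definition row_restrict :: "'m set \<Rightarrow> real^'d^'m \<Rightarrow> real^'d \<Rightarrow> real^'m" where
  "row_restrict S A x = (\<chi> i. if i \<in> S then (A *v x) $ i else 0)"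

lemma linear_row_restrict: "linear (row_restrict S A)"
  by (rule linearI)
     (auto simp: row_restrict_def vec_eq_iff matrix_vector_right_distrib matrix_vector_mult_scaleR)

lemma phase_retrieval_complement_property:
  assumes "phase_retrieval A"
  shows "inj (row_restrict S A) \<or> inj (row_restrict (- S) A)"
proof (rule ccontr)
  assume "\<not> ?thesis"
  then obtain u v where u: "row_restrict S A u = 0" "u \<noteq> 0"
    and v: "row_restrict (- S) A v = 0" "v \<noteq> 0"
    using linear_row_restrict by (metis linear_injective_0)
  have "\<bar>(A *v (u + v)) $ i\<bar> = \<bar>(A *v (u - v)) $ i\<bar>" for i
  proof -
    have "(A *v u) $ i = 0 \<or> (A *v v) $ i = 0"
      using u(1) v(1) by (cases "i \<in> S") (auto simp: row_restrict_def vec_eq_iff dest: spec[of _ i])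
    then show ?thesis by (auto simp: matrix_vector_right_distrib matrix_vector_mult_diff_distrib)
  qed
  then have "absmv A (u + v) = absmv A (u - v)" by (simp add: absmv_def vec_eq_iff)
  then have "u + v = u - v \<or> u + v = - (u - v)"
    using assms unfolding phase_retrieval_def by blast
  then have "2 *\<^sub>R v = 0 \<or> 2 *\<^sub>R u = 0" by (auto simp: scaleR_2 algebra_simps)
  then show False using u v by simp
qed

lemma uniform_lower_bound_injective_row_restrict:
  obtains B :: real where "B > 0"
    "\<And>S u. inj (row_restrict S A) \<Longrightarrow> B * norm u \<le> norm (row_restrict S A u)"
proof -
  have "\<exists>B>0. inj (row_restrict S A) \<longrightarrow> (\<forall>u. B * norm u \<le> norm (row_restrict S A u))" for S
    using linear_inj_bounded_below_pos[OF linear_row_restrict] zero_less_one by metis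
  then obtain B where B: "\<And>S. B S > 0"
    "\<And>S u. inj (row_restrict S A) \<Longrightarrow> B S * norm u \<le> norm (row_restrict S A u)"
    by metis
  have "Min (range B) > 0" "\<And>S. Min (range B) \<le> B S" using B(1) by auto
  then show ?thesis
    by (intro that[of "Min (range B)"]) (auto intro: order_trans[OF mult_right_mono B(2)])
qed

lemma abs_diff_abs_eq_min: "\<bar>\<bar>a\<bar> - \<bar>b\<bar>\<bar> = min \<bar>a - b\<bar> \<bar>a + b\<bar>" for a b :: real
  by (auto simp: abs_if min_def)

lemma phase_retrieval_lower_Lipschitz:
  fixes A :: "real^'d^'m"
  assumes "phase_retrieval A"
  obtains c where "c > 0"
    "\<And>x y. c * min (norm (x - y)) (norm (x + y)) \<le> norm (absmv A x - absmv A y)"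
proof -
  obtain B where B: "B > 0"
    "\<And>S u. inj (row_restrict S A) \<Longrightarrow> B * norm u \<le> norm (row_restrict S A u)"
    using uniform_lower_bound_injective_row_restrict by blast
  have "B * min (norm (x - y)) (norm (x + y)) \<le> norm (absmv A x - absmv A y)" for x y
  proof -
    define S where "S = {i. \<bar>(A *v (x - y)) $ i\<bar> \<le> \<bar>(A *v (x + y)) $ i\<bar>}"
    have component: "\<bar>absmv A x $ i - absmv A y $ i\<bar>
        = min \<bar>(A *v (x - y)) $ i\<bar> \<bar>(A *v (x + y)) $ i\<bar>" for i
      using abs_diff_abs_eq_min
      by (simp add: absmv_def matrix_vector_right_distrib matrix_vector_mult_diff_distrib)
    have "norm (row_restrict S A (x - y)) \<le> norm (absmv A x - absmv A y)"
      "norm (row_restrict (- S) A (x + y)) \<le> norm (absmv A x - absmv A y)"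
      by (rule norm_le_componentwise_cart, simp add: row_restrict_def component S_def)+
    then show ?thesis
      using phase_retrieval_complement_property[OF assms, of S] B(2)[of S "x - y"]
        B(2)[of "- S" "x + y"] \<open>B > 0\<close>
      by (smt (verit) min.cobounded1 min.cobounded2 mult_left_mono)
  qed
  with \<open>B > 0\<close> show ?thesis by (rule that)
qed

definition sign_flip :: "'m set \<Rightarrow> real^'d^'m \<Rightarrow> real^'d \<Rightarrow> real^'m" where
  "sign_flip S A x = (\<chi> i. if i \<in> S then - (A *v x) $ i else (A *v x) $ i)"

definition sign_cone :: "'m set \<Rightarrow> real^'d^'m \<Rightarrow> (real^'m) set" where
  "sign_cone S A = range (sign_flip S A) \<inter> {y. \<forall>i. 0 \<le> y $ i}"

lemma linear_sign_flip: "linear (sign_flip S A)"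
  by (rule linearI)
     (auto simp: sign_flip_def vec_eq_iff matrix_vector_right_distrib matrix_vector_mult_scaleR)

lemma subspace_range_sign_flip: "subspace (range (sign_flip S A))"
  using linear_subspace_image[OF linear_sign_flip subspace_UNIV] .

lemma closed_sign_cone: "closed (sign_cone S A)"
  unfolding sign_cone_def
  by (intro closed_Int closed_subspace subspace_range_sign_flip closed_positive_orthant)

lemma convex_sign_cone: "convex (sign_cone S A)"
  unfolding sign_cone_def
proof (rule convex_Int)
  show "convex (range (sign_flip S A))" by (rule subspace_imp_convex[OF subspace_range_sign_flip])
  show "convex {y :: real^'m. \<forall>i. 0 \<le> y $ i}"
    by (rule convex_box_cart) (simp add: atLeast_def[symmetric])
qed

lemma sign_cone_nonempty: "sign_cone S A \<noteq> {}"
proof -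
  have "sign_flip S A 0 = 0" using linear_0[OF linear_sign_flip] .
  then have "sign_flip S A 0 \<in> sign_cone S A" by (simp add: sign_cone_def)
  then show ?thesis by blast
qed

lemma KA_eq_Union_sign_cone: "KA A = (\<Union>S. sign_cone S A)"
proof (intro equalityI subsetI)
  fix y assume "y \<in> KA A"
  then obtain x where "y = absmv A x" by (auto simp: KA_def)
  then have "y = sign_flip {i. (A *v x) $ i < 0} A x" "\<forall>i. 0 \<le> y $ i"
    by (auto simp: vec_eq_iff absmv_def sign_flip_def)
  then show "y \<in> (\<Union>S. sign_cone S A)" by (auto simp: sign_cone_def)
next
  fix y assume "y \<in> (\<Union>S. sign_cone S A)"
  then obtain S x where "y = sign_flip S A x" "\<forall>i. 0 \<le> y $ i" by (auto simp: sign_cone_def)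
  then have "y = absmv A x" by (auto simp: vec_eq_iff absmv_def sign_flip_def split: if_splits)
  then show "y \<in> KA A" by (simp add: KA_def)
qed

lemma closed_KA: "closed (KA A)"
  by (simp add: KA_eq_Union_sign_cone closed_sign_cone closed_Union)

lemma KA_nonempty: "KA A \<noteq> {}"
  by (simp add: KA_def)

lemma closest_point_KA:
  "closest_point (KA A) p \<in> KA A" "\<And>k. k \<in> KA A \<Longrightarrow> dist p (closest_point (KA A) p) \<le> dist p k"
  using closest_point_exists[OF closed_KA[of A] KA_nonempty[of A]] by auto

lemma UA_closest_point_KA_unique:
  assumes "p \<in> UA A" "z \<in> KA A" "\<forall>k\<in>KA A. dist p z \<le> dist p k"
  shows "z = closest_point (KA A) p"
  using assms closest_point_KA[where A = A and p = p] unfolding UA_def by auto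

lemma closest_point_KA_eq_sign_cone:
  assumes "p \<in> UA A" "infdist p (sign_cone S A) \<le> infdist p (KA A)"
  shows "closest_point (KA A) p = closest_point (sign_cone S A) p"
proof -
  let ?z = "closest_point (sign_cone S A) p"
  have "?z \<in> sign_cone S A"
    using closest_point_in_set[OF closed_sign_cone sign_cone_nonempty] .
  then have "?z \<in> KA A" by (auto simp: KA_eq_Union_sign_cone)
  have "dist p ?z = infdist p (sign_cone S A)"
    by (rule infdist_eq_dist_closest_point[OF closed_sign_cone sign_cone_nonempty, symmetric])
  with assms(2) have "\<forall>k\<in>KA A. dist p ?z \<le> dist p k"
    using infdist_le[of _ "KA A" p] by (metis order_trans)
  then show ?thesis using UA_closest_point_KA_unique[OF assms(1) \<open>?z \<in> KA A\<close>] by simp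
qed

lemma exists_sign_cone_as_close_as_KA: "\<exists>S. infdist p (sign_cone S A) \<le> infdist p (KA A)"
proof -
  obtain S where "closest_point (KA A) p \<in> sign_cone S A"
    using closest_point_KA(1) by (auto simp: KA_eq_Union_sign_cone)
  then have "infdist p (sign_cone S A) \<le> infdist p (KA A)"
    using infdist_le[of _ "sign_cone S A" p] infdist_eq_dist_closest_point[OF closed_KA[of A] KA_nonempty[of A], of p]
    by simp
  then show ?thesis ..
qed

lemma closest_point_KA_dist_le_same_sign_cone:
  assumes "p \<in> UA A" "infdist p (sign_cone S A) \<le> infdist p (KA A)"
    and "q \<in> UA A" "infdist q (sign_cone S A) \<le> infdist q (KA A)"
  shows "dist (closest_point (KA A) p) (closest_point (KA A) q) \<le> dist p q"
  using closest_point_lipschitz[OF convex_sign_cone[of S A] closed_sign_cone sign_cone_nonempty, of p q]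
  by (simp add: closest_point_KA_eq_sign_cone[OF assms(1,2)] closest_point_KA_eq_sign_cone[OF assms(3,4)])

lemma closest_point_KA_Lipschitz_on_convex:
  fixes A :: "real^'d^'m"
  assumes "convex \<Omega>" "\<Omega> \<subseteq> UA A" "b \<in> \<Omega>" "b' \<in> \<Omega>"
  shows "dist (closest_point (KA A) b) (closest_point (KA A) b') \<le> dist b b'"
proof -
  define p where "p t = (1 - t) *\<^sub>R b + t *\<^sub>R b'" for t :: real
  have p_UA: "p t \<in> UA A" if "t \<in> {0..1}" for t
    using that assms convexD_alt[of \<Omega> b b'] unfolding p_def by auto
  have dist_p: "dist (p s) (p t) = \<bar>s - t\<bar> * dist b b'" for s t
  proof -
    have "p s - p t = (s - t) *\<^sub>R (b' - b)" unfolding p_def by (simp add: algebra_simps)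
    then show ?thesis by (simp add: dist_norm norm_minus_commute)
  qed
  define T where
    "T S = {0..1} \<inter> {t. infdist (p t) (sign_cone S A) \<le> infdist (p t) (KA A)}" for S :: "'m set"
  have "closed (T S)" for S
    unfolding T_def p_def
    by (intro closed_Int closed_atLeastAtMost closed_Collect_le continuous_on_infdist continuous_intros)
  moreover have "dist (closest_point (KA A) (p s)) (closest_point (KA A) (p t)) \<le> dist b b' * \<bar>s - t\<bar>"
    if "s \<in> T S" "t \<in> T S" for S s t
    using closest_point_KA_dist_le_same_sign_cone[of "p s" A S "p t"] that p_UA
    by (simp add: T_def dist_p mult.commute)
  moreover have "{0..1} \<subseteq> \<Union>(T ` UNIV)"
    using exists_sign_cone_as_close_as_KA by (auto simp: T_def)
  ultimately have "dist (closest_point (KA A) (p 0)) (closest_point (KA A) (p 1)) \<le> dist b b' * (1 - 0)"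
    by (intro dist_le_of_finite_closed_cover[where T = T and F = UNIV]) simp_all
  then show ?thesis by (simp add: p_def)
qed

lemma Phi_if_absmv_eq_closest_point:
  assumes "absmv A x = closest_point (KA A) p"
  shows "x \<in> Phi A p"
  unfolding Phi_def
proof (intro CollectI allI power_mono)
  fix y
  show "norm (absmv A x - p) \<le> norm (absmv A y - p)"
    using closest_point_KA(2)[of "absmv A y" A p] assms by (simp add: KA_def dist_norm norm_minus_commute)
qed simp

lemma Phi_dist_le_min:
  assumes "x \<in> Phi A b" "y \<in> Phi A b'"
  shows "Phi_dist A b b' \<le> min (norm (x - y)) (norm (x + y))"
proof -
  let ?D = "{norm (x - c *\<^sub>R y) | x y c. x \<in> Phi A b \<and> y \<in> Phi A b' \<and> c \<in> {1, -1 :: real}}"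
  have "bdd_below ?D" by (rule bdd_belowI[of _ 0]) auto
  moreover have "norm (x - 1 *\<^sub>R y) \<in> ?D" "norm (x - (-1) *\<^sub>R y) \<in> ?D" using assms by blast+
  ultimately show ?thesis unfolding Phi_dist_def by (auto intro: cInf_lower)
qed

theorem theorem5p5:
  fixes A :: "real^'d^'m"
  assumes "phase_retrieval A"
  shows "\<exists>\<alpha>>0. \<forall>\<Omega>. open \<Omega> \<and> connected \<Omega> \<and> \<Omega> \<noteq> {} \<and> convex \<Omega> \<and> \<Omega> \<subseteq> UA A \<longrightarrow>
           (\<forall>b\<in>\<Omega>. \<forall>b'\<in>\<Omega>. \<alpha> * Phi_dist A b b' \<le> norm (b - b'))"
proof -
  obtain c where "c > 0"
    and c: "\<And>x y. c * min (norm (x - y)) (norm (x + y)) \<le> norm (absmv A x - absmv A y)"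
    using phase_retrieval_lower_Lipschitz[OF assms] by blast
  have "c * Phi_dist A b b' \<le> norm (b - b')"
    if "convex \<Omega>" "\<Omega> \<subseteq> UA A" "b \<in> \<Omega>" "b' \<in> \<Omega>" for \<Omega> b b'
  proof -
    obtain x y where x: "absmv A x = closest_point (KA A) b"
      and y: "absmv A y = closest_point (KA A) b'"
      using closest_point_KA(1) by (metis KA_def imageE)
    have "c * Phi_dist A b b' \<le> c * min (norm (x - y)) (norm (x + y))"
      using Phi_dist_le_min[OF Phi_if_absmv_eq_closest_point[OF x] Phi_if_absmv_eq_closest_point[OF y]]
        \<open>c > 0\<close> by simp
    also have "\<dots> \<le> dist (closest_point (KA A) b) (closest_point (KA A) b')"
      using c[of x y] by (simp add: x y dist_norm)
    also have "\<dots> \<le> dist b b'"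
      by (rule closest_point_KA_Lipschitz_on_convex[OF that])
    finally show ?thesis by (simp add: dist_norm)
  qed
  with \<open>c > 0\<close> show ?thesis by blast
qed

end
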